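(* For $M\geq1$ let $T_M$ denote the number of pairs $((d_1,\ldots,d_M),\tau)$ where $(d_1,\ldots,d_M)$ is an integer sequence with $d_j\in\{1,-1,-2,-3,\ldots\}$ for all $j$, $\sum_{j=1}^k d_j\geq1$ for all $1\leq k\leq M$, and $\sum_{j=1}^M d_j=1$, and $\tau$ is a function assigning to each index $j$ with $d_j\leq -2$ a value $\tau(j)\in\{1,2,3,4\}$ (and is undefined on the other indices). Then $T_M=o(4^M)$ as $M\to\infty$. *)

theory Defs
  imports Complex_Main "HOL-Library.FuncSet" "HOL-Library.Landau_Symbols"
begin

text \<open>Admissible sequences (d_1,...,d_M), represented as lists of length M
  (list position j-1 holds d_j): every entry is 1 or at most -1, i.e. in
  {1,-1,-2,-3,...}; all partial sums d_1+...+d_k (1 <= k <= M) are >= 1;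
  and the total sum is 1.\<close>
definition adm_seqs :: "nat \<Rightarrow> int list set" where
  "adm_seqs M = {d. length d = M \<and>
     (\<forall>j<M. d ! j = 1 \<or> d ! j \<le> -1) \<and>
     (\<forall>k\<in>{1..M}. sum_list (take k d) \<ge> 1) \<and>
     sum_list d = 1}"

definition big_neg_idx :: "int list \<Rightarrow> nat set" where
  "big_neg_idx d = {j. j < length d \<and> d ! j \<le> -2}"

definition T_pairs :: "nat \<Rightarrow> (int list \<times> (nat \<Rightarrow> nat)) set" where
  "T_pairs M = {(d, \<tau>). d \<in> adm_seqs M \<and> \<tau> \<in> big_neg_idx d \<rightarrow>\<^sub>E {1..4}}"

definition T :: "nat \<Rightarrow> nat" where
  "T M = card (T_pairs M)"

end

theory Submission
  imports Defs
begin

(*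
  Proof idea: a weighted generating-function (transfer-matrix) bound.
  Give a sequence d the weight 4^(number of entries <= -2); then T M is the
  total weight of the admissible sequences of length M.  Drop the condition
  that the total sum is 1, keeping only positivity of all partial sums
  ("prefix sequences"), and weight each prefix sequence additionally by u^(sum d)
  for a base u > 1.  Appending one step x to a prefix sequence with sum s
  multiplies its weight by w(x) u^x with x = 1 or -s < x <= -1, and summing
  these factors over all x gives at most  c(u) = u + 1/u + 4/(u(u-1)),
  by a geometric series.  Hence the weighted count of prefix sequences of
  length M is at most c(u)^M, and since admissible sequences have sum 1,
  T M <= c(u)^M / u.  For u = 5/2 we get c(u) = 119/30 < 4, so T M = o(4^M).
*)

definition prefix_seqs :: "nat \<Rightarrow> int list set" where
  "prefix_seqs M = {d. length d = M \<and> (\<forall>j<M. d ! j = 1 \<or> d ! j \<le> -1) \<and>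
     (\<forall>k\<in>{1..M}. sum_list (take k d) \<ge> 1)}"

definition admissible_steps :: "int \<Rightarrow> int set" where
  "admissible_steps s = {x. (x = 1 \<or> x \<le> -1) \<and> s + x \<ge> 1}"

lemma adm_seqs_subset_prefix_seqs: "adm_seqs M \<subseteq> prefix_seqs M"
  by (auto simp: adm_seqs_def prefix_seqs_def)

lemma prefix_seqs_0: "prefix_seqs 0 = {[]}"
  by (auto simp: prefix_seqs_def)

lemma snoc_in_prefix_seqs_iff:
  assumes "length d = M"
  shows "d @ [x] \<in> prefix_seqs (Suc M) \<longleftrightarrow>
         d \<in> prefix_seqs M \<and> x \<in> admissible_steps (sum_list d)"
proof -
  have entries: "(\<forall>j<Suc M. (d @ [x]) ! j = 1 \<or> (d @ [x]) ! j \<le> -1) \<longleftrightarrow>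
      (\<forall>j<M. d ! j = 1 \<or> d ! j \<le> -1) \<and> (x = 1 \<or> x \<le> -1)"
    using assms by (auto simp: less_Suc_eq nth_append)
  have take_snoc: "take k (d @ [x]) = take k d" if "k \<le> M" for k
    using that assms by simp
  have partial_sums: "(\<forall>k\<in>{1..Suc M}. sum_list (take k (d @ [x])) \<ge> 1) \<longleftrightarrow>
      (\<forall>k\<in>{1..M}. sum_list (take k d) \<ge> 1) \<and> sum_list d + x \<ge> 1"
  proof -
    have "{1..Suc M} = insert (Suc M) {1..M}" by auto
    then show ?thesis
      using assms take_snoc by (auto simp: conj_commute)
  qed
  show ?thesis
    unfolding prefix_seqs_def admissible_steps_def mem_Collect_eq entries partial_sums
    using assms by auto
qed

lemma prefix_seqs_Suc:
  "prefix_seqs (Suc M) =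
     (\<lambda>(d, x). d @ [x]) ` Sigma (prefix_seqs M) (\<lambda>d. admissible_steps (sum_list d))"
proof (intro equalityI subsetI)
  fix e assume e: "e \<in> prefix_seqs (Suc M)"
  then have "length e = Suc M" by (simp add: prefix_seqs_def)
  then obtain d x where e_snoc: "e = d @ [x]" and len: "length d = M"
    by (auto simp: length_Suc_conv_rev)
  then have "(d, x) \<in> Sigma (prefix_seqs M) (\<lambda>d. admissible_steps (sum_list d))"
    using e snoc_in_prefix_seqs_iff[OF len] by simp
  then show "e \<in> (\<lambda>(d, x). d @ [x]) ` Sigma (prefix_seqs M) (\<lambda>d. admissible_steps (sum_list d))"
    unfolding e_snoc by (rule rev_image_eqI) simp
next
  fix e assume "e \<in> (\<lambda>(d, x). d @ [x]) ` Sigma (prefix_seqs M) (\<lambda>d. admissible_steps (sum_list d))"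
  then obtain d x where "e = d @ [x]" "d \<in> prefix_seqs M" "x \<in> admissible_steps (sum_list d)"
    by auto
  then show "e \<in> prefix_seqs (Suc M)"
    using snoc_in_prefix_seqs_iff[of d M x] by (simp add: prefix_seqs_def)
qed

lemma admissible_steps_subset:
  "admissible_steps s \<subseteq> insert 1 ((\<lambda>k. - int k) ` {1..<nat s})"
proof
  fix x assume "x \<in> admissible_steps s"
  then consider "x = 1" | "x \<le> -1" "s + x \<ge> 1"
    by (auto simp: admissible_steps_def)
  then show "x \<in> insert 1 ((\<lambda>k. - int k) ` {1..<nat s})"
  proof cases
    case 2
    then have "x = - int (nat (- x))" and "nat (- x) \<in> {1..<nat s}" by auto
    then show ?thesis by blast
  qed simp
qed

lemma finite_admissible_steps: "finite (admissible_steps s)"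
  by (rule finite_subset[OF admissible_steps_subset]) simp

lemma finite_prefix_seqs: "finite (prefix_seqs M)"
  by (induction M) (auto simp: prefix_seqs_0 prefix_seqs_Suc finite_admissible_steps)

text \<open>Each entry <= -2 carries the 4 choices of its label.\<close>
definition step_weight :: "int \<Rightarrow> real" where
  "step_weight x = (if x \<le> -2 then 4 else 1)"

definition seq_weight :: "int list \<Rightarrow> real" where
  "seq_weight d = (\<Prod>j<length d. step_weight (d ! j))"

lemma seq_weight_snoc: "seq_weight (d @ [x]) = seq_weight d * step_weight x"
proof -
  have "seq_weight (d @ [x]) = (\<Prod>j<length d. step_weight ((d @ [x]) ! j)) * step_weight x"
    by (simp add: seq_weight_def)
  also have "(\<Prod>j<length d. step_weight ((d @ [x]) ! j)) = seq_weight d"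
    unfolding seq_weight_def by (rule prod.cong) (simp_all add: nth_append)
  finally show ?thesis .
qed

lemma seq_weight_nonneg: "seq_weight d \<ge> 0"
  unfolding seq_weight_def step_weight_def by (intro prod_nonneg) auto

lemma seq_weight_eq: "seq_weight d = 4 ^ card (big_neg_idx d)"
proof -
  have "seq_weight d = (\<Prod>j\<in>{..<length d}. if d ! j \<le> -2 then 4 else 1)"
    by (simp add: seq_weight_def step_weight_def)
  also have "\<dots> = (\<Prod>j\<in>{..<length d} \<inter> {j. d ! j \<le> -2}. 4)"
    by (simp add: prod.If_cases)
  also have "{..<length d} \<inter> {j. d ! j \<le> -2} = big_neg_idx d"
    by (auto simp: big_neg_idx_def)
  finally show ?thesis by simp
qed

lemma T_eq_weight_sum: "real (T M) = (\<Sum>d\<in>adm_seqs M. seq_weight d)"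
proof -
  have fin: "finite (adm_seqs M)"
    by (rule finite_subset[OF adm_seqs_subset_prefix_seqs finite_prefix_seqs])
  have fin_idx: "finite (big_neg_idx d)" for d
    by (simp add: big_neg_idx_def)
  have "T_pairs M = Sigma (adm_seqs M) (\<lambda>d. big_neg_idx d \<rightarrow>\<^sub>E {1..4::nat})"
    by (auto simp: T_pairs_def)
  then have "T M = (\<Sum>d\<in>adm_seqs M. card (big_neg_idx d \<rightarrow>\<^sub>E {1..4::nat}))"
    unfolding T_def using fin fin_idx by (simp add: finite_PiE)
  also have "\<dots> = (\<Sum>d\<in>adm_seqs M. 4 ^ card (big_neg_idx d))"
    using fin_idx by (simp add: card_PiE)
  finally show ?thesis by (simp add: seq_weight_eq)
qed

lemma geometric_tail_le:
  fixes q :: real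
  assumes "0 \<le> q" "q < 1"
  shows "(\<Sum>k\<in>{m..<n}. q ^ k) \<le> q ^ m / (1 - q)"
proof (cases "m < n")
  case True
  have "(1 - q) * (\<Sum>k\<in>{m..<n}. q ^ k) = q ^ m - q ^ n"
    using sum_gp_multiplied[of m "n - 1" q] True by (simp add: atLeastLessThanSuc_atLeastAtMost[symmetric])
  then have "(\<Sum>k\<in>{m..<n}. q ^ k) = (q ^ m - q ^ n) / (1 - q)"
    using assms by (simp add: field_simps)
  also have "\<dots> \<le> q ^ m / (1 - q)"
    using assms by (simp add: divide_right_mono)
  finally show ?thesis .
qed (use assms in simp)

lemma negative_steps_sum_le:
  fixes q :: real
  assumes "0 \<le> q" "q < 1"
  shows "(\<Sum>k\<in>{1..<n}. (if k \<ge> 2 then 4 else 1) * q ^ k) \<le> q + 4 * (q\<^sup>2 / (1 - q))"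
proof (cases "n \<le> 1")
  case False
  then have "{1..<n} = insert 1 {2..<n}" by auto
  then have "(\<Sum>k\<in>{1..<n}. (if k \<ge> 2 then 4 else 1) * q ^ k) = q + 4 * (\<Sum>k\<in>{2..<n}. q ^ k)"
    by (simp add: sum_distrib_left)
  then show ?thesis
    using geometric_tail_le[OF assms, of 2 n] by simp
qed (use assms in simp)

text \<open>The total factor by which one step can multiply the weight.\<close>
definition step_bound :: "real \<Rightarrow> real" where
  "step_bound u = u + 1 / u + 4 / (u * (u - 1))"

lemma step_sum_le:
  fixes u :: real
  assumes "1 < u"
  shows "(\<Sum>x\<in>admissible_steps s. step_weight x * u powi x) \<le> step_bound u"
proof -
  define q where "q = 1 / u"
  have q: "0 \<le> q" "q < 1" using assms by (auto simp: q_def)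
  have inj: "inj_on (\<lambda>k. - int k) {1..<nat s}" by (auto simp: inj_on_def)
  have neg_term: "step_weight (- int k) * u powi (- int k) = (if k \<ge> 2 then 4 else 1) * q ^ k"
    if "k \<ge> 1" for k
    using that by (auto simp: step_weight_def q_def power_int_minus power_one_over inverse_eq_divide)
  have "(\<Sum>x\<in>admissible_steps s. step_weight x * u powi x)
      \<le> (\<Sum>x\<in>insert 1 ((\<lambda>k. - int k) ` {1..<nat s}). step_weight x * u powi x)"
    using assms by (intro sum_mono2 admissible_steps_subset) (auto simp: step_weight_def)
  also have "\<dots> = u + (\<Sum>k\<in>{1..<nat s}. step_weight (- int k) * u powi (- int k))"
    using inj by (simp add: sum.reindex step_weight_def image_iff)
  also have "\<dots> = u + (\<Sum>k\<in>{1..<nat s}. (if k \<ge> 2 then 4 else 1) * q ^ k)"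
    using neg_term by (intro arg_cong[where f = "(+) u"] sum.cong) auto
  also have "\<dots> \<le> u + (q + 4 * (q\<^sup>2 / (1 - q)))"
    using negative_steps_sum_le[OF q] by simp
  also have "\<dots> = step_bound u"
    using assms by (simp add: step_bound_def q_def field_simps power2_eq_square)
  finally show ?thesis .
qed

definition weighted_count :: "real \<Rightarrow> nat \<Rightarrow> real" where
  "weighted_count u M = (\<Sum>d\<in>prefix_seqs M. seq_weight d * u powi sum_list d)"

lemma weighted_count_Suc_le:
  fixes u :: real
  assumes "1 < u"
  shows "weighted_count u (Suc M) \<le> step_bound u * weighted_count u M"
proof -
  have inj: "inj_on (\<lambda>(d, x). d @ [x]) (Sigma (prefix_seqs M) (\<lambda>d. admissible_steps (sum_list d)))"
    by (auto simp: inj_on_def)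
  have "weighted_count u (Suc M)
      = (\<Sum>d\<in>prefix_seqs M. \<Sum>x\<in>admissible_steps (sum_list d).
           seq_weight (d @ [x]) * u powi sum_list (d @ [x]))"
    unfolding weighted_count_def prefix_seqs_Suc using inj finite_prefix_seqs finite_admissible_steps
    by (simp add: sum.reindex sum.Sigma split_def)
  also have "\<dots> = (\<Sum>d\<in>prefix_seqs M. seq_weight d * u powi sum_list d *
                    (\<Sum>x\<in>admissible_steps (sum_list d). step_weight x * u powi x))"
    using assms by (simp add: seq_weight_snoc power_int_add sum_distrib_left mult_ac)
  also have "\<dots> \<le> (\<Sum>d\<in>prefix_seqs M. seq_weight d * u powi sum_list d * step_bound u)"
    using assms by (intro sum_mono mult_left_mono step_sum_le mult_nonneg_nonneg seq_weight_nonneg) simp_all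
  also have "\<dots> = step_bound u * weighted_count u M"
    by (simp add: weighted_count_def sum_distrib_left mult_ac)
  finally show ?thesis .
qed

lemma weighted_count_le:
  fixes u :: real
  assumes "1 < u"
  shows "weighted_count u M \<le> step_bound u ^ M"
proof (induction M)
  case 0
  show ?case by (simp add: weighted_count_def prefix_seqs_0 seq_weight_def)
next
  case (Suc M)
  have "0 \<le> step_bound u"
    using assms by (simp add: step_bound_def)
  then show ?case
    using weighted_count_Suc_le[OF assms, of M] Suc mult_left_mono by fastforce
qed

text \<open>Admissible sequences have sum 1, so each contributes weight u to the
  weighted count.\<close>
lemma T_le:
  fixes u :: real
  assumes "1 < u"
  shows "real (T M) \<le> step_bound u ^ M / u"
proof -
  have "u * real (T M) = (\<Sum>d\<in>adm_seqs M. seq_weight d * u powi sum_list d)"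
    by (simp add: T_eq_weight_sum sum_distrib_left adm_seqs_def mult.commute)
  also have "\<dots> \<le> weighted_count u M"
    unfolding weighted_count_def using assms
    by (intro sum_mono2 finite_prefix_seqs adm_seqs_subset_prefix_seqs) (simp add: seq_weight_nonneg)
  also have "\<dots> \<le> step_bound u ^ M"
    by (rule weighted_count_le[OF assms])
  finally show ?thesis
    using assms by (simp add: field_simps)
qed

theorem mainTheorem7:
  shows "(\<lambda>M. real (T M)) \<in> o(\<lambda>M. 4 ^ M)"
proof -
  have c: "step_bound (5/2) = 119/30"
    by (simp add: step_bound_def)
  have "(\<lambda>M. real (T M)) \<in> O(\<lambda>M. (119/30::real) ^ M)"
  proof (intro bigoI[where c = "2/5"] always_eventually allI)
    fix M
    show "norm (real (T M)) \<le> 2/5 * norm ((119/30::real) ^ M)"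
      using T_le[of "5/2" M] unfolding c by simp
  qed
  moreover have "(\<lambda>M. (119/30::real) ^ M / 4 ^ M) \<longlonglongrightarrow> 0"
    by (simp add: power_divide[symmetric] LIMSEQ_realpow_zero)
  then have "(\<lambda>M. (119/30::real) ^ M) \<in> o(\<lambda>M. 4 ^ M)"
    by (rule smalloI_tendsto) simp
  ultimately show ?thesis
    by (rule landau_o.big_small_trans)
qed

end
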